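(* For any generalized causal team $T$ over a signature $\sigma$: $T\models^g\bigsqcup_{\mathcal F\in\mathbb F_\sigma}\Phi^{\mathcal F}$ if and only if $T$ is uniform.
   Context: A signature $\sigma=(\mathrm{Dom},\mathrm{Ran})$: $\mathrm{Dom}$ nonempty finite set of variables, each with nonempty finite range $\mathrm{Ran}(X)$; $\mathbf X=\mathbf x$ abbreviates $X_1=x_1\wedge\dots\wedge X_n=x_n$ ($\mathbf x\in\mathrm{Ran}(\mathbf X)=\prod\mathrm{Ran}(X_i)$), inconsistent if it contains $X=x,X=x'$ with $x\neq x'$. $\mathcal{CO}[\sigma]$-formulas: $\alpha::=X=x\mid\neg\alpha\mid\alpha\wedge\alpha\mid\alpha\vee\alpha\mid\mathbf X=\mathbf x\;\Box\!\!\rightarrow\alpha$; $\alpha\supset\beta$ abbreviates $\neg\alpha\vee\beta$; $\sqcup$ is the global disjunction ($T\models\varphi\sqcup\psi$ iff $T\models\varphi$ or $T\models\psi$), $\bigsqcup$ its iterated form. A system of functions $\mathcal F$: for each $V\in\mathrm{En}(\mathcal F)\subseteq\mathrm{Dom}$ parents $PA^{\mathcal F}_V\subseteq\mathrm{Dom}\setminus\{V\}$ and $\mathcal F_V:\mathrm{Ran}(PA^{\mathcal F}_V)\to\mathrm{Ran}(V)$; $\mathrm{Ex}(\mathcal F)=\mathrm{Dom}\setminus\mathrm{En}(\mathcal F)$; only recursive (acyclic parent graph) systems, forming the finite set $\mathbb F_\sigma$. An assignment $s$ ($s(X)\in\mathrm{Ran}(X)$) is compatible with $\mathcal F$ if $s(V)=\mathcal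 F_V(s(PA^{\mathcal F}_V))$ for $V\in\mathrm{En}(\mathcal F)$. A generalized causal team is a set $T$ of pairs $(s,\mathcal F)$ with $\mathcal F\in\mathbb F_\sigma$ and $s$ compatible with $\mathcal F$; $T^-=\{s:(s,\mathcal F)\in T\}$. For consistent $\mathbf X=\mathbf x$: $\mathcal F_{\mathbf X=\mathbf x}$ restricts $\mathcal F$ to $\mathrm{En}(\mathcal F)\setminus\mathbf X$; $s^{\mathcal F}_{\mathbf X=\mathbf x}$: $X_i\mapsto x_i$, $V\mapsto s(V)$ for $V\in\mathrm{Ex}(\mathcal F)\setminus\mathbf X$, $V\mapsto\mathcal F_V(s^{\mathcal F}_{\mathbf X=\mathbf x}(PA^{\mathcal F}_V))$ for $V\in\mathrm{En}(\mathcal F)\setminus\mathbf X$; $T_{\mathbf X=\mathbf x}=\{(s^{\mathcal F}_{\mathbf X=\mathbf x},\mathcal F_{\mathbf X=\mathbf x}):(s,\mathcal F)\in T\}$. $\models^g$: $T\models X=x$ iff $s(X)=x$ for all $s\in T^-$; $T\models\neg\alpha$ iff $\{(s,\mathcal F)\}\not\models\alpha$ for all $(s,\mathcal F)\in T$; $\wedge$ classical; $T\models\varphi\vee\psi$ iff $T=T_1\cup T_2$ with $T_1\models\varphi$, $T_2\models\psi$; $T\models\mathbf X=\mathbf x\;\Box\!\!\rightarrow\varphi$ iff $\mathbf X=\mathbf x$ inconsistent or $T_{\mathbf X=\mathbf x}\models\varphi$. $\mathrm{Cn}(\mathcal F)$ = $\{V\in\mathrm{En}(\mathcal F):\mathcal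 F_V\text{ constant}\}$. $\mathcal F_V\sim\mathcal G_V$ iff $\mathcal F_V(\mathbf x\mathbf y)=\mathcal G_V(\mathbf x\mathbf z)$ for all $\mathbf x\in\mathrm{Ran}(PA^{\mathcal F}_V\cap PA^{\mathcal G}_V)$, $\mathbf y\in\mathrm{Ran}(PA^{\mathcal F}_V\setminus PA^{\mathcal G}_V)$, $\mathbf z\in\mathrm{Ran}(PA^{\mathcal G}_V\setminus PA^{\mathcal F}_V)$; $\mathcal F\sim\mathcal G$ iff $\mathrm{En}(\mathcal F)\setminus\mathrm{Cn}(\mathcal F)=\mathrm{En}(\mathcal G)\setminus\mathrm{Cn}(\mathcal G)$ and $\mathcal F_V\sim\mathcal G_V$ for each such $V$. $T$ is uniform if $\mathcal F\sim\mathcal G$ for all $(s,\mathcal F),(t,\mathcal G)\in T$ (the empty team is uniform). With $\mathbf W_V$ listing $\mathrm{Dom}\setminus\{V\}$: $\Phi^{\mathcal F}:=\bigwedge_{V\in\mathrm{En}(\mathcal F)\setminus\mathrm{Cn}(\mathcal F)}\eta(V)\wedge\bigwedge_{V\notin\mathrm{En}(\mathcal F)\setminus\mathrm{Cn}(\mathcal F)}\xi(V)$, where $\eta(V)$ is the conjunction of all $(\mathbf W=\mathbf w\wedge PA^{\mathcal F}_V=\mathbf p)\;\Box\!\!\rightarrow V=\mathcal F_V(\mathbf p)$ ($\mathbf W$ listing $\mathrm{Dom}\setminus(PA^{\mathcal F}_V\cup\{V\})$, $\mathbf w\in\mathrm{Ran}(\mathbf W)$, $\mathbf p\in\mathrm{Ran}(PA^{\mathcal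 F}_V)$) and $\xi(V)$ is the conjunction of all $V=v\supset(\mathbf W_V=\mathbf w\;\Box\!\!\rightarrow V=v)$ ($v\in\mathrm{Ran}(V)$, $\mathbf w\in\mathrm{Ran}(\mathbf W_V)$). *)

theory Defs
  imports Main "HOL-Library.FuncSet"
begin

text \<open>A signature is given by a set Dom of variables (type 'v) and a range
  function Ran :: 'v => 'a set. An assignment is an element of PiE Dom Ran.\<close>

datatype ('v, 'a) CO =
    Atom 'v 'a
  | Neg "('v, 'a) CO"
  | Conj "('v, 'a) CO" "('v, 'a) CO"
  | Disj "('v, 'a) CO" "('v, 'a) CO"
  | Cf "('v \<times> 'a) list" "('v, 'a) CO"

definition consistent :: "('v \<times> 'a) list \<Rightarrow> bool" where
  "consistent xs \<longleftrightarrow> (\<forall>(X, x) \<in> set xs. \<forall>(Y, y) \<in> set xs. X = Y \<longrightarrow> x = y)"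

record ('v, 'a) sysf =
  en :: "'v set"
  pa :: "'v \<Rightarrow> 'v set"
  fn :: "'v \<Rightarrow> ('v \<Rightarrow> 'a) \<Rightarrow> 'a"       (* F_V applied to an assignment of PA_V *)

definition parent_rel :: "('v, 'a) sysf \<Rightarrow> ('v \<times> 'v) set" where
  "parent_rel F = {(U, V). V \<in> en F \<and> U \<in> pa F V}"

text \<open>Recursive system of functions over the signature (canonical representation:
  parents empty and function undefined outside En, F_V undefined outside Ran(PA_V)).\<close>
definition is_sysf :: "'v set \<Rightarrow> ('v \<Rightarrow> 'a set) \<Rightarrow> ('v, 'a) sysf \<Rightarrow> bool" where
  "is_sysf Dom Ran F \<longleftrightarrow>
     en F \<subseteq> Dom \<and>
     (\<forall>V. V \<notin> en F \<longrightarrow> pa F V = {} \<and> fn F V = undefined) \<and>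
     (\<forall>V \<in> en F. pa F V \<subseteq> Dom - {V} \<and>
        (\<forall>p \<in> PiE (pa F V) Ran. fn F V p \<in> Ran V) \<and>
        (\<forall>p. p \<notin> PiE (pa F V) Ran \<longrightarrow> fn F V p = undefined)) \<and>
     acyclic (parent_rel F)"

definition sysfs :: "'v set \<Rightarrow> ('v \<Rightarrow> 'a set) \<Rightarrow> ('v, 'a) sysf set" where
  "sysfs Dom Ran = {F. is_sysf Dom Ran F}"

definition compatible :: "('v \<Rightarrow> 'a) \<Rightarrow> ('v, 'a) sysf \<Rightarrow> bool" where
  "compatible s F \<longleftrightarrow> (\<forall>V \<in> en F. s V = fn F V (restrict s (pa F V)))"

definition gcteam :: "'v set \<Rightarrow> ('v \<Rightarrow> 'a set) \<Rightarrow> (('v \<Rightarrow> 'a) \<times> ('v, 'a) sysf) set \<Rightarrow> bool" where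
  "gcteam Dom Ran T \<longleftrightarrow>
     (\<forall>(s, F) \<in> T. s \<in> PiE Dom Ran \<and> F \<in> sysfs Dom Ran \<and> compatible s F)"

definition interv_sysf :: "('v \<times> 'a) list \<Rightarrow> ('v, 'a) sysf \<Rightarrow> ('v, 'a) sysf" where
  "interv_sysf xs F =
     (let E = en F - fst ` set xs in
      \<lparr> en = E, pa = (\<lambda>V. if V \<in> E then pa F V else {}),
        fn = (\<lambda>V. if V \<in> E then fn F V else undefined) \<rparr>)"

text \<open>s^F_{X=x}: the unique assignment (on Dom) satisfying the recursive equations.\<close>
definition interv_asg ::
  "'v set \<Rightarrow> ('v \<times> 'a) list \<Rightarrow> ('v \<Rightarrow> 'a) \<Rightarrow> ('v, 'a) sysf \<Rightarrow> ('v \<Rightarrow> 'a)" where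
  "interv_asg Dom xs s F =
     (THE t. \<forall>V. t V =
        (if V \<notin> Dom then undefined
         else if V \<in> fst ` set xs then the (map_of xs V)
         else if V \<notin> en F then s V
         else fn F V (restrict t (pa F V))))"

definition interv_team ::
  "'v set \<Rightarrow> ('v \<times> 'a) list \<Rightarrow> (('v \<Rightarrow> 'a) \<times> ('v, 'a) sysf) set
     \<Rightarrow> (('v \<Rightarrow> 'a) \<times> ('v, 'a) sysf) set" where
  "interv_team Dom xs T = (\<lambda>(s, F). (interv_asg Dom xs s F, interv_sysf xs F)) ` T"

fun sat :: "'v set \<Rightarrow> (('v \<Rightarrow> 'a) \<times> ('v, 'a) sysf) set \<Rightarrow> ('v, 'a) CO \<Rightarrow> bool" where
  "sat Dom T (Atom X x) = (\<forall>(s, F) \<in> T. s X = x)"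
| "sat Dom T (Neg \<alpha>) = (\<forall>p \<in> T. \<not> sat Dom {p} \<alpha>)"
| "sat Dom T (Conj \<alpha> \<beta>) = (sat Dom T \<alpha> \<and> sat Dom T \<beta>)"
| "sat Dom T (Disj \<alpha> \<beta>) = (\<exists>T1 T2. T = T1 \<union> T2 \<and> sat Dom T1 \<alpha> \<and> sat Dom T2 \<beta>)"
| "sat Dom T (Cf xs \<alpha>) = (\<not> consistent xs \<or> sat Dom (interv_team Dom xs T) \<alpha>)"

definition Cn :: "('v \<Rightarrow> 'a set) \<Rightarrow> ('v, 'a) sysf \<Rightarrow> 'v set" where
  "Cn Ran F = {V \<in> en F. \<exists>c. \<forall>p \<in> PiE (pa F V) Ran. fn F V p = c}"

text \<open>F_V ~ G_V: agreement on every joint assignment of PA^F_V \<union> PA^G_V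
  (i.e. F_V(x y) = G_V(x z) for all x, y, z).\<close>
definition fn_sim :: "('v \<Rightarrow> 'a set) \<Rightarrow> 'v \<Rightarrow> ('v, 'a) sysf \<Rightarrow> ('v, 'a) sysf \<Rightarrow> bool" where
  "fn_sim Ran V F G \<longleftrightarrow>
     (\<forall>p \<in> PiE (pa F V \<union> pa G V) Ran.
        fn F V (restrict p (pa F V)) = fn G V (restrict p (pa G V)))"

definition sysf_sim :: "('v \<Rightarrow> 'a set) \<Rightarrow> ('v, 'a) sysf \<Rightarrow> ('v, 'a) sysf \<Rightarrow> bool" where
  "sysf_sim Ran F G \<longleftrightarrow>
     en F - Cn Ran F = en G - Cn Ran G \<and> (\<forall>V \<in> en F - Cn Ran F. fn_sim Ran V F G)"

definition uniform :: "('v \<Rightarrow> 'a set) \<Rightarrow> (('v \<Rightarrow> 'a) \<times> ('v, 'a) sysf) set \<Rightarrow> bool" where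
  "uniform Ran T \<longleftrightarrow> (\<forall>(s, F) \<in> T. \<forall>(t, G) \<in> T. sysf_sim Ran F G)"

fun bigconj_list :: "('v, 'a) CO list \<Rightarrow> ('v, 'a) CO" where
  "bigconj_list [\<phi>] = \<phi>"
| "bigconj_list (\<phi> # \<psi> # \<psi>s) = Conj \<phi> (bigconj_list (\<psi> # \<psi>s))"

text \<open>Conjunction of a finite nonempty set of formulas (in some enumeration order).\<close>
definition bigconj :: "('v, 'a) CO set \<Rightarrow> ('v, 'a) CO" where
  "bigconj S = bigconj_list (SOME xs. set xs = S \<and> distinct xs)"

text \<open>The conjunction W = w for an assignment w of a finite set of variables A, as a list.\<close>
definition asg_list :: "'v set \<Rightarrow> ('v \<Rightarrow> 'a) \<Rightarrow> ('v \<times> 'a) list" where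
  "asg_list A w = map (\<lambda>X. (X, w X)) (SOME xs. set xs = A \<and> distinct xs)"

text \<open>eta(V): the conjuncts (W = w and PA_V = p) []-> V = F_V(p); the joint assignment
  of W \<union> PA_V = Dom - {V} is q.\<close>
definition eta :: "'v set \<Rightarrow> ('v \<Rightarrow> 'a set) \<Rightarrow> ('v, 'a) sysf \<Rightarrow> 'v \<Rightarrow> ('v, 'a) CO" where
  "eta Dom Ran F V = bigconj
     ((\<lambda>q. Cf (asg_list (Dom - {V}) q) (Atom V (fn F V (restrict q (pa F V)))))
        ` PiE (Dom - {V}) Ran)"

text \<open>xi(V): the conjuncts V = v \<supset> (W_V = w []-> V = v), with \<supset> = Neg _ \<or> _.\<close>
definition xi :: "'v set \<Rightarrow> ('v \<Rightarrow> 'a set) \<Rightarrow> 'v \<Rightarrow> ('v, 'a) CO" where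
  "xi Dom Ran V = bigconj
     ((\<lambda>(v, w). Disj (Neg (Atom V v)) (Cf (asg_list (Dom - {V}) w) (Atom V v)))
        ` (Ran V \<times> PiE (Dom - {V}) Ran))"

definition Phi :: "'v set \<Rightarrow> ('v \<Rightarrow> 'a set) \<Rightarrow> ('v, 'a) sysf \<Rightarrow> ('v, 'a) CO" where
  "Phi Dom Ran F = bigconj
     (eta Dom Ran F ` (en F - Cn Ran F) \<union> xi Dom Ran ` (Dom - (en F - Cn Ran F)))"

end

theory Submission
  imports Defs
begin

text \<open>Fix a system G. Intervening on all variables but V leaves, in a team member (s, F), the
  value F_V(q) if V is endogenous in F and s(V) otherwise. Hence the conjunct xi(V) holds in T iff
  no F occurring in T has V as a non-constant endogenous variable (for a constant F_V the value s(V)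
  is that constant, by compatibility), and eta(V) holds iff every such F_V is non-constant and
  agrees with G_V on all joint parent assignments. So T satisfies Phi^G iff every system of T is
  similar to G; as similarity is symmetric and transitive on systems, such a G exists iff T is
  uniform, taking for G any system of T, or the empty system if T is empty.\<close>

lemma restrict_image_PiE:
  assumes "A \<subseteq> B" "\<forall>X\<in>B. S X \<noteq> {}"
  shows "(\<lambda>q. restrict q A) ` PiE B S = PiE A S"
proof
  show "(\<lambda>q. restrict q A) ` PiE B S \<subseteq> PiE A S"
    using assms(1) by auto
  show "PiE A S \<subseteq> (\<lambda>q. restrict q A) ` PiE B S"
  proof
    fix p assume p: "p \<in> PiE A S"
    define q where "q X = (if X \<in> A then p X else if X \<in> B then SOME y. y \<in> S X else undefined)" for X
    have "q \<in> PiE B S"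
      using p assms by (auto simp: q_def PiE_def extensional_def some_in_eq)
    moreover have "restrict q A = p"
      using p by (auto simp: q_def fun_eq_iff PiE_def extensional_def)
    ultimately show "p \<in> (\<lambda>q. restrict q A) ` PiE B S"
      by force
  qed
qed

lemma ball_PiE_restrict:
  assumes "A \<subseteq> B" "\<forall>X\<in>B. S X \<noteq> {}"
  shows "(\<forall>q\<in>PiE B S. P (restrict q A)) \<longleftrightarrow> (\<forall>p\<in>PiE A S. P p)"
  by (subst restrict_image_PiE[OF assms, symmetric]) blast

lemma fn_sim_iff:
  assumes "pa F V \<union> pa G V \<subseteq> B" "\<forall>X\<in>B. Ran X \<noteq> {}"
  shows "fn_sim Ran V F G \<longleftrightarrow>
    (\<forall>q\<in>PiE B Ran. fn F V (restrict q (pa F V)) = fn G V (restrict q (pa G V)))"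
  unfolding fn_sim_def ball_PiE_restrict[OF assms, symmetric] by (simp add: Int_absorb1)

lemma Cn_iff:
  assumes "pa F V \<subseteq> B" "\<forall>X\<in>B. Ran X \<noteq> {}"
  shows "V \<in> Cn Ran F \<longleftrightarrow> V \<in> en F \<and> (\<exists>c. \<forall>q\<in>PiE B Ran. fn F V (restrict q (pa F V)) = c)"
proof -
  have "(\<forall>p\<in>PiE (pa F V) Ran. fn F V p = c) \<longleftrightarrow> (\<forall>q\<in>PiE B Ran. fn F V (restrict q (pa F V)) = c)"
    for c
    using ball_PiE_restrict[OF assms, of "\<lambda>p. fn F V p = c"] by simp
  then show ?thesis
    unfolding Cn_def by simp
qed

lemma is_sysf_en_subset: "is_sysf Dom Ran F \<Longrightarrow> en F \<subseteq> Dom"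
  unfolding is_sysf_def by blast

lemma is_sysf_pa_subset: "is_sysf Dom Ran F \<Longrightarrow> V \<in> en F \<Longrightarrow> pa F V \<subseteq> Dom - {V}"
  unfolding is_sysf_def by blast

lemma gcteamD:
  "gcteam Dom Ran T \<Longrightarrow> (s, F) \<in> T \<Longrightarrow> s \<in> PiE Dom Ran \<and> is_sysf Dom Ran F \<and> compatible s F"
  unfolding gcteam_def sysfs_def by blast

lemma empty_sysf_in_sysfs: "\<lparr>en = {}, pa = \<lambda>_. {}, fn = \<lambda>_. undefined\<rparr> \<in> sysfs Dom Ran"
  by (simp add: sysfs_def is_sysf_def parent_rel_def acyclic_def)

lemma sysf_sim_sym: "sysf_sim Ran F G \<Longrightarrow> sysf_sim Ran G F"
  unfolding sysf_sim_def fn_sim_def by (simp add: Un_commute)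

lemma sat_downward_closed:
  "sat Dom T \<phi> \<Longrightarrow> S \<subseteq> T \<Longrightarrow> sat Dom S \<phi>"
proof (induction \<phi> arbitrary: T S)
  case (Disj \<phi> \<psi>)
  then obtain T1 T2 where "T = T1 \<union> T2" "sat Dom T1 \<phi>" "sat Dom T2 \<psi>"
    by auto
  with Disj have "S = (T1 \<inter> S) \<union> (T2 \<inter> S)" "sat Dom (T1 \<inter> S) \<phi>" "sat Dom (T2 \<inter> S) \<psi>"
    by blast+
  then show ?case
    by auto
next
  case (Cf xs \<phi>)
  have "interv_team Dom xs S \<subseteq> interv_team Dom xs T"
    unfolding interv_team_def using Cf.prems(2) by (rule image_mono)
  with Cf show ?case
    by auto
qed auto

lemma sat_Neg_Atom_Disj:
  "sat Dom T (Disj (Neg (Atom V v)) \<phi>) \<longleftrightarrow> sat Dom {p \<in> T. fst p V = v} \<phi>"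
proof
  assume "sat Dom T (Disj (Neg (Atom V v)) \<phi>)"
  then obtain T1 T2 where "T = T1 \<union> T2" "sat Dom T1 (Neg (Atom V v))" "sat Dom T2 \<phi>"
    by auto
  then have "{p \<in> T. fst p V = v} \<subseteq> T2"
    by auto
  with \<open>sat Dom T2 \<phi>\<close> show "sat Dom {p \<in> T. fst p V = v} \<phi>"
    by (rule sat_downward_closed)
next
  assume "sat Dom {p \<in> T. fst p V = v} \<phi>"
  moreover have "sat Dom {p \<in> T. fst p V \<noteq> v} (Neg (Atom V v))"
    by auto
  moreover have "T = {p \<in> T. fst p V \<noteq> v} \<union> {p \<in> T. fst p V = v}"
    by auto
  ultimately show "sat Dom T (Disj (Neg (Atom V v)) \<phi>)"
    unfolding sat.simps(4) by blast
qed

lemma sat_bigconj: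
  assumes "finite S" "S \<noteq> {}"
  shows "sat Dom T (bigconj S) \<longleftrightarrow> (\<forall>\<phi>\<in>S. sat Dom T \<phi>)"
proof -
  have sat_bigconj_list: "sat Dom T (bigconj_list xs) \<longleftrightarrow> (\<forall>\<phi>\<in>set xs. sat Dom T \<phi>)"
    if "xs \<noteq> []" for xs
    using that by (induction xs rule: bigconj_list.induct) auto
  let ?xs = "SOME xs. set xs = S \<and> distinct xs"
  have "set ?xs = S"
    using someI_ex[OF finite_distinct_list[OF assms(1)]] by blast
  moreover from this have "?xs \<noteq> []"
    using assms(2) by auto
  ultimately show ?thesis
    unfolding bigconj_def using sat_bigconj_list[of ?xs] by simp
qed

lemma consistent_asg_list: "consistent (asg_list A w)"
  unfolding asg_list_def consistent_def by auto

lemma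
  assumes "finite A"
  shows fst_set_asg_list: "fst ` set (asg_list A w) = A"
    and map_of_asg_list: "map_of (asg_list A w) = (Some \<circ> w) |` A"
proof -
  have "set (SOME xs. set xs = A \<and> distinct xs) = A"
    using someI_ex[OF finite_distinct_list[OF assms]] by blast
  then show "fst ` set (asg_list A w) = A" "map_of (asg_list A w) = (Some \<circ> w) |` A"
    unfolding asg_list_def by (auto simp: image_image map_of_map_restrict)
qed

definition response :: "('v, 'a) sysf \<Rightarrow> ('v \<Rightarrow> 'a) \<Rightarrow> 'v \<Rightarrow> ('v \<Rightarrow> 'a) \<Rightarrow> 'a" where
  "response F s V q = (if V \<in> en F then fn F V (restrict q (pa F V)) else s V)"

lemma interv_asg_all_but:
  assumes "finite Dom" "is_sysf Dom Ran F" "V \<in> Dom"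
  shows "interv_asg Dom (asg_list (Dom - {V}) q) s F V = response F s V q"
proof -
  let ?xs = "asg_list (Dom - {V}) q"
  let ?equations = "\<lambda>t. \<forall>W. t W = (if W \<notin> Dom then undefined
      else if W \<in> fst ` set ?xs then the (map_of ?xs W)
      else if W \<notin> en F then s W else fn F W (restrict t (pa F W)))"
  define t0 where "t0 W = (if W \<notin> Dom then undefined else if W = V then response F s V q else q W)"
    for W
  have xs_dom: "fst ` set ?xs = Dom - {V}"
    and xs_val: "W \<in> Dom - {V} \<Longrightarrow> the (map_of ?xs W) = q W" for W
    using assms(1) by (simp_all add: fst_set_asg_list map_of_asg_list)
  have restrict_pa: "restrict t (pa F V) = restrict q (pa F V)"
    if "\<forall>W\<in>Dom - {V}. t W = q W" "V \<in> en F" for t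
    using that is_sysf_pa_subset[OF assms(2)] by (intro restrict_ext) blast
  have "?equations t \<longleftrightarrow> t = t0" for t
  proof
    assume t: "?equations t"
    then have agree: "\<forall>W\<in>Dom - {V}. t W = q W"
      by (simp add: xs_dom xs_val)
    show "t = t0"
    proof
      fix W
      show "t W = t0 W"
      proof (cases "W \<in> Dom - {V}")
        case True
        then show ?thesis
          using agree by (simp add: t0_def)
      next
        case False
        then have "W \<notin> fst ` set ?xs"
          by (simp add: xs_dom)
        with t have "t W = (if W \<notin> Dom then undefined
            else if W \<notin> en F then s W else fn F W (restrict t (pa F W)))"
          by simp
        then show ?thesis
          using False restrict_pa[OF agree] by (auto simp: t0_def response_def)
      qed
    qed
  next
    assume "t = t0"
    moreover have "\<forall>W\<in>Dom - {V}. t0 W = q W"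
      by (simp add: t0_def)
    ultimately show "?equations t"
      using restrict_pa[of t0] by (auto simp: t0_def response_def xs_dom xs_val)
  qed
  then have "interv_asg Dom ?xs s F = t0"
    unfolding interv_asg_def by simp
  then show ?thesis
    using assms(3) by (simp add: t0_def)
qed

lemma sat_intervene_all_but:
  assumes "finite Dom" "\<forall>(s, F)\<in>T. is_sysf Dom Ran F" "V \<in> Dom"
  shows "sat Dom T (Cf (asg_list (Dom - {V}) q) (Atom V c)) \<longleftrightarrow> (\<forall>(s, F)\<in>T. response F s V q = c)"
  using assms by (fastforce simp: interv_team_def consistent_asg_list interv_asg_all_but)

locale finite_signature =
  fixes Dom :: "'v set" and Ran :: "'v \<Rightarrow> 'a set"
  assumes finite_Dom: "finite Dom"
    and Dom_nonempty: "Dom \<noteq> {}"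
    and finite_Ran: "X \<in> Dom \<Longrightarrow> finite (Ran X)"
    and Ran_nonempty: "X \<in> Dom \<Longrightarrow> Ran X \<noteq> {}"
begin

lemma finite_PiE_all_but: "finite (PiE (Dom - {V}) Ran)"
  using finite_Dom finite_Ran by (auto intro!: finite_PiE)

lemma PiE_all_but_nonempty: "PiE (Dom - {V}) Ran \<noteq> {}"
  using Ran_nonempty by (auto simp: PiE_eq_empty_iff)

lemma sysf_sim_trans:
  assumes "is_sysf Dom Ran F" "is_sysf Dom Ran G" "is_sysf Dom Ran H"
    and "sysf_sim Ran F G" "sysf_sim Ran G H"
  shows "sysf_sim Ran F H"
  unfolding sysf_sim_def
proof (intro conjI ballI)
  show "en F - Cn Ran F = en H - Cn Ran H"
    using assms(4,5) by (simp add: sysf_sim_def)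
  fix V assume V: "V \<in> en F - Cn Ran F"
  then have en: "V \<in> en F" "V \<in> en G" "V \<in> en H"
    and sim: "fn_sim Ran V F G" "fn_sim Ran V G H"
    using assms(4,5) by (auto simp: sysf_sim_def)
  then have "pa F V \<subseteq> Dom" "pa G V \<subseteq> Dom" "pa H V \<subseteq> Dom"
    using is_sysf_pa_subset[OF assms(1) en(1)] is_sysf_pa_subset[OF assms(2) en(2)]
      is_sysf_pa_subset[OF assms(3) en(3)] by auto
  then have pa: "pa F V \<union> pa G V \<subseteq> Dom" "pa G V \<union> pa H V \<subseteq> Dom" "pa F V \<union> pa H V \<subseteq> Dom"
    by auto
  have ne: "\<forall>X\<in>Dom. Ran X \<noteq> {}"
    using Ran_nonempty by blast
  have "\<forall>q\<in>PiE Dom Ran. fn F V (restrict q (pa F V)) = fn G V (restrict q (pa G V))"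
    "\<forall>q\<in>PiE Dom Ran. fn G V (restrict q (pa G V)) = fn H V (restrict q (pa H V))"
    using sim fn_sim_iff[OF pa(1) ne] fn_sim_iff[OF pa(2) ne] by auto
  then show "fn_sim Ran V F H"
    unfolding fn_sim_iff[OF pa(3) ne] by auto
qed

lemma response_invariant_iff:
  assumes "s \<in> PiE Dom Ran" "is_sysf Dom Ran F" "compatible s F"
  shows "(\<forall>q\<in>PiE (Dom - {V}) Ran. response F s V q = s V) \<longleftrightarrow> V \<notin> en F - Cn Ran F"
proof (cases "V \<in> en F")
  case False
  then show ?thesis
    by (simp add: response_def)
next
  case True
  have pa: "pa F V \<subseteq> Dom - {V}" and ne: "\<forall>X\<in>Dom - {V}. Ran X \<noteq> {}"
    using is_sysf_pa_subset[OF assms(2) True] Ran_nonempty by blast+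
  have "restrict s (pa F V) \<in> PiE (pa F V) Ran"
    using assms(1) pa by auto
  then obtain q0 where "q0 \<in> PiE (Dom - {V}) Ran" "restrict q0 (pa F V) = restrict s (pa F V)"
    using restrict_image_PiE[OF pa ne] by (metis imageE)
  moreover have "s V = fn F V (restrict s (pa F V))"
    using assms(3) True by (simp add: compatible_def)
  ultimately have "(\<exists>c. \<forall>q\<in>PiE (Dom - {V}) Ran. fn F V (restrict q (pa F V)) = c) \<longleftrightarrow>
      (\<forall>q\<in>PiE (Dom - {V}) Ran. fn F V (restrict q (pa F V)) = s V)"
    by metis
  then show ?thesis
    using Cn_iff[OF pa ne] True by (simp add: response_def)
qed

lemma response_eq_fn_iff:
  assumes "is_sysf Dom Ran F" "is_sysf Dom Ran G" "V \<in> en G - Cn Ran G"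
  shows "(\<forall>q\<in>PiE (Dom - {V}) Ran. response F s V q = fn G V (restrict q (pa G V)))
     \<longleftrightarrow> V \<in> en F - Cn Ran F \<and> fn_sim Ran V F G"
proof -
  have ne: "\<forall>X\<in>Dom - {V}. Ran X \<noteq> {}"
    using Ran_nonempty by blast
  have paG: "pa G V \<subseteq> Dom - {V}"
    using is_sysf_pa_subset[OF assms(2)] assms(3) by blast
  have G_nonconst: "\<nexists>c. \<forall>q\<in>PiE (Dom - {V}) Ran. fn G V (restrict q (pa G V)) = c"
    using Cn_iff[OF paG ne] assms(3) by simp
  show ?thesis
  proof
    assume resp: "\<forall>q\<in>PiE (Dom - {V}) Ran. response F s V q = fn G V (restrict q (pa G V))"
    have en: "V \<in> en F"
    proof (rule ccontr)
      assume "V \<notin> en F"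
      then have "\<forall>q\<in>PiE (Dom - {V}) Ran. fn G V (restrict q (pa G V)) = s V"
        using resp by (simp add: response_def)
      with G_nonconst show False
        by blast
    qed
    then have paFG: "pa F V \<union> pa G V \<subseteq> Dom - {V}"
      using is_sysf_pa_subset[OF assms(1)] paG by blast
    have agree: "\<forall>q\<in>PiE (Dom - {V}) Ran. fn F V (restrict q (pa F V)) = fn G V (restrict q (pa G V))"
      using resp en by (simp add: response_def)
    have "V \<notin> Cn Ran F"
    proof
      assume "V \<in> Cn Ran F"
      then obtain c where "\<forall>q\<in>PiE (Dom - {V}) Ran. fn F V (restrict q (pa F V)) = c"
        using Cn_iff[of F V "Dom - {V}"] paFG ne by blast
      with agree have "\<forall>q\<in>PiE (Dom - {V}) Ran. fn G V (restrict q (pa G V)) = c"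
        by auto
      with G_nonconst show False
        by blast
    qed
    moreover have "fn_sim Ran V F G"
      unfolding fn_sim_iff[OF paFG ne] by (rule agree)
    ultimately show "V \<in> en F - Cn Ran F \<and> fn_sim Ran V F G"
      using en by blast
  next
    assume sim: "V \<in> en F - Cn Ran F \<and> fn_sim Ran V F G"
    then have paFG: "pa F V \<union> pa G V \<subseteq> Dom - {V}"
      using is_sysf_pa_subset[OF assms(1)] paG by blast
    show "\<forall>q\<in>PiE (Dom - {V}) Ran. response F s V q = fn G V (restrict q (pa G V))"
      using sim fn_sim_iff[OF paFG ne] by (simp add: response_def)
  qed
qed

lemma sat_xi_iff:
  assumes "gcteam Dom Ran T" "V \<in> Dom"
  shows "sat Dom T (xi Dom Ran V) \<longleftrightarrow> (\<forall>(s, F)\<in>T. V \<notin> en F - Cn Ran F)"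
proof -
  let ?\<phi> = "\<lambda>v q. Cf (asg_list (Dom - {V}) q) (Atom V v)"
  have sys: "\<forall>(s, F)\<in>{p \<in> T. fst p V = v}. is_sysf Dom Ran F" for v
    using gcteamD[OF assms(1)] by blast
  have "finite (Ran V \<times> PiE (Dom - {V}) Ran)" "Ran V \<times> PiE (Dom - {V}) Ran \<noteq> {}"
    using finite_Ran[OF assms(2)] Ran_nonempty[OF assms(2)]
    by (simp_all add: finite_PiE_all_but PiE_all_but_nonempty)
  then have "sat Dom T (xi Dom Ran V) \<longleftrightarrow>
      (\<forall>v\<in>Ran V. \<forall>q\<in>PiE (Dom - {V}) Ran. sat Dom T (Disj (Neg (Atom V v)) (?\<phi> v q)))"
    unfolding xi_def by (simp del: sat.simps add: sat_bigconj)
  also have "\<dots> \<longleftrightarrow> (\<forall>v\<in>Ran V. \<forall>q\<in>PiE (Dom - {V}) Ran. \<forall>(s, F)\<in>{p \<in> T. fst p V = v}.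
      response F s V q = v)"
    by (simp only: sat_Neg_Atom_Disj sat_intervene_all_but[OF finite_Dom sys assms(2)])
  also have "\<dots> \<longleftrightarrow> (\<forall>(s, F)\<in>T. \<forall>q\<in>PiE (Dom - {V}) Ran. response F s V q = s V)"
    using gcteamD[OF assms(1)] assms(2) by fastforce
  also have "\<dots> \<longleftrightarrow> (\<forall>(s, F)\<in>T. V \<notin> en F - Cn Ran F)"
    using gcteamD[OF assms(1)] response_invariant_iff by fast
  finally show ?thesis .
qed

lemma sat_eta_iff:
  assumes "gcteam Dom Ran T" "is_sysf Dom Ran G" "V \<in> en G - Cn Ran G"
  shows "sat Dom T (eta Dom Ran G V) \<longleftrightarrow> (\<forall>(s, F)\<in>T. V \<in> en F - Cn Ran F \<and> fn_sim Ran V F G)"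
proof -
  have V: "V \<in> Dom"
    using assms(2,3) is_sysf_en_subset by blast
  have sys: "\<forall>(s, F)\<in>T. is_sysf Dom Ran F"
    using gcteamD[OF assms(1)] by blast
  have "sat Dom T (eta Dom Ran G V) \<longleftrightarrow>
      (\<forall>q\<in>PiE (Dom - {V}) Ran. \<forall>(s, F)\<in>T. response F s V q = fn G V (restrict q (pa G V)))"
    unfolding eta_def using finite_PiE_all_but PiE_all_but_nonempty
    by (simp del: sat.simps add: sat_bigconj sat_intervene_all_but[OF finite_Dom sys V])
  also have "\<dots> \<longleftrightarrow> (\<forall>(s, F)\<in>T. V \<in> en F - Cn Ran F \<and> fn_sim Ran V F G)"
    using sys response_eq_fn_iff[OF _ assms(2,3)] by fast
  finally show ?thesis .
qed

lemma sat_Phi_iff: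
  assumes "gcteam Dom Ran T" "G \<in> sysfs Dom Ran"
  shows "sat Dom T (Phi Dom Ran G) \<longleftrightarrow> (\<forall>(s, F)\<in>T. sysf_sim Ran F G)"
proof -
  let ?A = "en G - Cn Ran G"
  have G: "is_sysf Dom Ran G"
    using assms(2) by (simp add: sysfs_def)
  then have A: "?A \<subseteq> Dom"
    using is_sysf_en_subset by blast
  have "sat Dom T (Phi Dom Ran G) \<longleftrightarrow>
      (\<forall>V\<in>?A. sat Dom T (eta Dom Ran G V)) \<and> (\<forall>V\<in>Dom - ?A. sat Dom T (xi Dom Ran V))"
    unfolding Phi_def using A finite_Dom Dom_nonempty
    by (subst sat_bigconj) (auto intro: finite_subset)
  also have "\<dots> \<longleftrightarrow> (\<forall>V\<in>?A. \<forall>(s, F)\<in>T. V \<in> en F - Cn Ran F \<and> fn_sim Ran V F G)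
      \<and> (\<forall>V\<in>Dom - ?A. \<forall>(s, F)\<in>T. V \<notin> en F - Cn Ran F)"
    using sat_eta_iff[OF assms(1) G] sat_xi_iff[OF assms(1)] by simp
  also have "\<dots> \<longleftrightarrow> (\<forall>(s, F)\<in>T. sysf_sim Ran F G)"
    using gcteamD[OF assms(1)] is_sysf_en_subset A unfolding sysf_sim_def by blast
  finally show ?thesis .
qed

lemma uniform_iff_ex_sysf_sim:
  assumes "gcteam Dom Ran T"
  shows "uniform Ran T \<longleftrightarrow> (\<exists>G\<in>sysfs Dom Ran. \<forall>(s, F)\<in>T. sysf_sim Ran F G)"
proof
  assume uniform: "uniform Ran T"
  show "\<exists>G\<in>sysfs Dom Ran. \<forall>(s, F)\<in>T. sysf_sim Ran F G"
  proof (cases "T = {}")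
    case True
    then show ?thesis
      using empty_sysf_in_sysfs by blast
  next
    case False
    then obtain s0 F0 where "(s0, F0) \<in> T"
      by auto
    moreover from this have "F0 \<in> sysfs Dom Ran"
      using assms by (auto simp: gcteam_def)
    ultimately show ?thesis
      using uniform unfolding uniform_def by blast
  qed
next
  assume "\<exists>G\<in>sysfs Dom Ran. \<forall>(s, F)\<in>T. sysf_sim Ran F G"
  then obtain G where G: "is_sysf Dom Ran G" and sim: "\<forall>(s, F)\<in>T. sysf_sim Ran F G"
    by (auto simp: sysfs_def)
  show "uniform Ran T"
    unfolding uniform_def
  proof (intro ballI, clarify)
    fix s F t F' assume "(s, F) \<in> T" "(t, F') \<in> T"
    then have "is_sysf Dom Ran F" "is_sysf Dom Ran F'" "sysf_sim Ran F G" "sysf_sim Ran G F'"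
      using gcteamD[OF assms] sim sysf_sim_sym[of Ran F' G] by auto
    then show "sysf_sim Ran F F'"
      using sysf_sim_trans G by blast
  qed
qed

end

theorem corollary3p5:
  fixes Dom :: "'v set" and Ran :: "'v \<Rightarrow> 'a set"
    and T :: "(('v \<Rightarrow> 'a) \<times> ('v, 'a) sysf) set"
  assumes "finite Dom" and "Dom \<noteq> {}"
    and "\<forall>X \<in> Dom. finite (Ran X) \<and> Ran X \<noteq> {}"
    and "gcteam Dom Ran T"
  shows "(\<exists>F \<in> sysfs Dom Ran. sat Dom T (Phi Dom Ran F)) \<longleftrightarrow> uniform Ran T"
proof -
  interpret finite_signature Dom Ran
    using assms(1-3) by unfold_locales auto
  show ?thesis
    using sat_Phi_iff[OF assms(4)] uniform_iff_ex_sysf_sim[OF assms(4)] by auto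
qed

end
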